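(* For every fixed integer $k\ge3$, the approximation ratio of $k$-Opt for \textsc{Metric TSP} satisfies $$\alpha_k(n)=\Omega\!\left(\frac{n}{\mathrm{ex}^{-1}(n,2k)}\right)\qquad(n\to\infty).$$
   Context: A \textsc{Metric TSP} instance on $n$ vertices is the complete graph $K_n$ with edge costs $c:E(K_n)\to\mathbb{R}_{\ge0}$ satisfying the triangle inequality. A tour is a Hamiltonian cycle, with length $c(T)=\sum_{e\in T}c(e)$; $\mathrm{OPT}(I)$ is the minimum tour length. A $k$-move replaces at most $k$ edges of a tour by other edges so that the result is again a tour; it is improving if the new tour is strictly shorter. A tour is $k$-optimal if no improving $k$-move exists. $\alpha_k(n)$ is the supremum of $c(T)/\mathrm{OPT}(I)$ over all \textsc{Metric TSP} instances $I$ on $n$ vertices with $\mathrm{OPT}(I)>0$ and all $k$-optimal tours $T$ of $I$. The girth of a graph is the length of its shortest cycle ($\infty$ if none). $\mathrm{ex}^{-1}(m,2k)$ is the minimum number of vertices of a simple graph with $m$ edges and girth at least $2k$. *)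

theory Defs
  imports Complex_Main "HOL-Library.Extended_Real"
begin

definition edges_Kn :: "nat \<Rightarrow> nat set set" where
  "edges_Kn n = {{u, v} | u v. u < n \<and> v < n \<and> u \<noteq> v}"

definition metric_inst :: "nat \<Rightarrow> (nat set \<Rightarrow> real) \<Rightarrow> bool" where
  "metric_inst n c \<longleftrightarrow>
     (\<forall>e\<in>edges_Kn n. c e \<ge> 0) \<and>
     (\<forall>u v w. u < n \<and> v < n \<and> w < n \<and> u \<noteq> v \<and> v \<noteq> w \<and> u \<noteq> w
        \<longrightarrow> c {u, w} \<le> c {u, v} + c {v, w})"

definition is_tour :: "nat \<Rightarrow> nat set set \<Rightarrow> bool" where
  "is_tour n T \<longleftrightarrow> 3 \<le> n \<and>
     (\<exists>p. bij_betw p {..<n} {..<n} \<and> T = (\<lambda>i. {p i, p (Suc i mod n)}) ` {..<n})"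

definition tour_len :: "(nat set \<Rightarrow> real) \<Rightarrow> nat set set \<Rightarrow> real" where
  "tour_len c T = (\<Sum>e\<in>T. c e)"

definition OPT :: "nat \<Rightarrow> (nat set \<Rightarrow> real) \<Rightarrow> real" where
  "OPT n c = Min (tour_len c ` {T. is_tour n T})"

definition k_move :: "nat \<Rightarrow> nat \<Rightarrow> nat set set \<Rightarrow> nat set set \<Rightarrow> bool" where
  "k_move k n T T' \<longleftrightarrow> is_tour n T \<and> is_tour n T' \<and> card (T - T') \<le> k"

definition k_optimal :: "nat \<Rightarrow> nat \<Rightarrow> (nat set \<Rightarrow> real) \<Rightarrow> nat set set \<Rightarrow> bool" where
  "k_optimal k n c T \<longleftrightarrow> is_tour n T \<and>
     \<not> (\<exists>T'. k_move k n T T' \<and> tour_len c T' < tour_len c T)"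

definition alpha :: "nat \<Rightarrow> nat \<Rightarrow> ereal" where
  "alpha k n = (SUP cT \<in> {(c, T). metric_inst n c \<and> OPT n c > 0 \<and> k_optimal k n c T}.
                   ereal (tour_len (fst cT) (snd cT) / OPT n (fst cT)))"

definition has_cycle_len :: "nat set set \<Rightarrow> nat \<Rightarrow> bool" where
  "has_cycle_len E l \<longleftrightarrow> 3 \<le> l \<and>
     (\<exists>v. inj_on v {..<l} \<and> (\<forall>i<l. {v i, v (Suc i mod l)} \<in> E))"

definition girth_ge :: "nat set set \<Rightarrow> nat \<Rightarrow> bool" where
  "girth_ge E g \<longleftrightarrow> (\<forall>l. l < g \<longrightarrow> \<not> has_cycle_len E l)"

definition exinv :: "nat \<Rightarrow> nat \<Rightarrow> nat" where
  "exinv m g = (LEAST N. \<exists>E. E \<subseteq> edges_Kn N \<and> card E = m \<and> girth_ge E g)"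

end

theory Submission
  imports Defs
begin

text \<open>Take a graph E with n edges and girth at least 2k on N = exinv n (2k) vertices. Its
  cycles can be merged into vertex-disjoint closed trails covering all but at most N edges, so
  if n \<ge> 2N some closed trail has L edges on K vertices with L / K \<ge> n / (2N). Walk the tour
  0, 1, ..., n - 1 along this trail (the vertices beyond L all go to its start) and let the cost
  of {u, v} be the graph distance of the images, truncated at k. The tour costs L and is k-optimal:
  a k-move that removes r tour edges and adds edges of total cost below r \<le> k gives, after
  replacing every added edge by a shortest walk, a nonempty set of fewer than 2k graph edges used
  an odd number of times, with all degrees even, hence a cycle shorter than the girth. Visiting
  the vertices sorted by image gives a tour of cost at most kK, so the ratio is at least
  L / (kK) \<ge> n / (2kN); for n < 2N the trivial ratio 1 suffices.\<close>

section \<open>Cycles in graphs\<close>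

definition cycle_edge :: "nat \<Rightarrow> (nat \<Rightarrow> nat) \<Rightarrow> nat \<Rightarrow> nat set" where
  "cycle_edge L w i = {w i, w (Suc i mod L)}"

lemma has_cycle_len_iff:
  "has_cycle_len E l \<longleftrightarrow> 3 \<le> l \<and> (\<exists>v. inj_on v {..<l} \<and> (\<forall>i<l. cycle_edge l v i \<in> E))"
  unfolding has_cycle_len_def cycle_edge_def ..

lemma has_cycle_len_mono: "has_cycle_len F l \<Longrightarrow> F \<subseteq> G \<Longrightarrow> has_cycle_len G l"
  unfolding has_cycle_len_def by blast

lemma finite_Union_if_card_2: "finite F \<Longrightarrow> \<forall>e\<in>F. card e = 2 \<Longrightarrow> finite (\<Union>F)"
  by (metis card.infinite finite_Union zero_neq_numeral)

lemma inj_on_cycle_edge: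
  assumes inj: "inj_on v {..<l}" and l: "3 \<le> l"
  shows "inj_on (cycle_edge l v) {..<l}"
proof (rule inj_onI, rule ccontr)
  fix s t assume s: "s \<in> {..<l}" and t: "t \<in> {..<l}" and "s \<noteq> t"
    and eq: "cycle_edge l v s = cycle_edge l v t"
  have "v s \<noteq> v t" using inj \<open>s \<noteq> t\<close> s t by (meson inj_on_eq_iff)
  then have "v s = v (Suc t mod l)" "v t = v (Suc s mod l)"
    using eq by (auto simp: cycle_edge_def doubleton_eq_iff)
  then have "s = Suc t mod l" "t = Suc s mod l"
    using inj s t l by (auto simp: inj_on_eq_iff)
  then have "s = Suc (Suc s) mod l" by (simp add: mod_Suc_eq)
  with s l show False by (cases "Suc (Suc s) < l") (auto simp: mod_if split: if_splits)
qed

lemma cycle_len_le_card: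
  assumes "has_cycle_len S l" and "finite S"
  shows "l \<le> card S"
proof -
  obtain v where v: "3 \<le> l" "inj_on v {..<l}" "\<forall>i<l. cycle_edge l v i \<in> S"
    using assms(1) unfolding has_cycle_len_iff by blast
  have "card (cycle_edge l v ` {..<l}) = l"
    using card_image[OF inj_on_cycle_edge[OF v(2,1)]] by simp
  moreover have "cycle_edge l v ` {..<l} \<subseteq> S" using v(3) by auto
  ultimately show ?thesis using assms(2) by (metis card_mono)
qed

fun iterate_walk :: "('a \<Rightarrow> 'a \<Rightarrow> 'a) \<Rightarrow> 'a \<Rightarrow> 'a \<Rightarrow> nat \<Rightarrow> 'a" where
  "iterate_walk nx a b 0 = a"
| "iterate_walk nx a b (Suc 0) = b"
| "iterate_walk nx a b (Suc (Suc n)) = nx (iterate_walk nx a b n) (iterate_walk nx a b (Suc n))"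

lemma nonbacktracking_walk_if_no_leaf:
  assumes e0: "e0 \<in> S" and two: "\<forall>e\<in>S. card e = 2"
    and deg: "\<forall>e\<in>S. \<forall>x\<in>e. \<exists>e'\<in>S. x \<in> e' \<and> e' \<noteq> e"
  shows "\<exists>x. \<forall>n. {x n, x (Suc n)} \<in> S \<and> x (Suc (Suc n)) \<noteq> x n"
proof -
  obtain a b where ab: "e0 = {a, b}" using two e0 unfolding card_2_iff by blast
  have "\<exists>y. {q, y} \<in> S \<and> y \<noteq> p" if pq: "{p, q} \<in> S" for p q
  proof -
    obtain e' where e': "e' \<in> S" "q \<in> e'" "e' \<noteq> {p, q}" using deg pq by blast
    obtain y z where "e' = {y, z}" using two e'(1) unfolding card_2_iff by blast
    then have "e' = {q, z} \<or> e' = {q, y}" using e'(2) by (auto simp: insert_commute)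
    then show ?thesis using e'(1,3) by (metis insert_commute)
  qed
  then obtain nx where nx: "\<And>p q. {p, q} \<in> S \<Longrightarrow> {q, nx p q} \<in> S \<and> nx p q \<noteq> p" by metis
  define x where "x = iterate_walk nx a b"
  have "{x n, x (Suc n)} \<in> S \<and> x (Suc (Suc n)) \<noteq> x n" for n
  proof (induction n)
    case 0 then show ?case using nx[of a b] e0 ab by (simp add: x_def)
  next
    case (Suc n)
    have "{x (Suc n), x (Suc (Suc n))} \<in> S" using nx[of "x n" "x (Suc n)"] Suc by (simp add: x_def)
    then show ?case using nx[of "x (Suc n)" "x (Suc (Suc n))"] by (simp add: x_def)
  qed
  then show ?thesis by blast
qed

lemma first_repetition:
  fixes x :: "nat \<Rightarrow> 'a"
  assumes "\<not> inj x"
  obtains i j where "i < j" "x i = x j" "inj_on x {..<j}"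
proof -
  have ex: "\<exists>j. \<exists>i<j. x i = x j" using assms unfolding inj_def by (metis linorder_neqE_nat)
  define j where "j = (LEAST j. \<exists>i<j. x i = x j)"
  obtain i where "i < j" "x i = x j" using LeastI_ex[OF ex] unfolding j_def[symmetric] by blast
  moreover have "inj_on x {..<j}"
  proof (rule inj_onI, rule ccontr)
    fix p q assume pq: "p \<in> {..<j}" "q \<in> {..<j}" "x p = x q" "p \<noteq> q"
    have "\<exists>i<max p q. x i = x (max p q)"
    proof (cases "p < q")
      case True then show ?thesis using pq by (auto simp: max_def)
    next
      case False then show ?thesis using pq by (auto simp: max_def intro!: exI[of _ q])
    qed
    then have "j \<le> max p q" unfolding j_def by (rule Least_le)
    then show False using pq by auto
  qed
  ultimately show ?thesis using that by blast
qed

text \<open>A walk in a finite graph repeats a vertex; between the first repetition and its earlier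
  occurrence it traces a cycle, of length at least 3 because the walk never backtracks.\<close>

lemma has_cycle_len_if_nonbacktracking_walk:
  assumes fin: "finite S" and two: "\<forall>e\<in>S. card e = 2"
    and walk: "\<forall>n. {x n, x (Suc n)} \<in> S \<and> x (Suc (Suc n)) \<noteq> x n"
  shows "\<exists>l. 3 \<le> l \<and> l \<le> card S \<and> has_cycle_len S l"
proof -
  have edge: "{x n, x (Suc n)} \<in> S" for n using walk by blast
  have "range x \<subseteq> \<Union>S" using edge by blast
  then have "finite (range x)" using finite_Union_if_card_2[OF fin two] by (rule finite_subset)
  then have "\<not> inj x" using finite_imageD[of x UNIV] by auto
  then obtain i0 j0 where i0: "i0 < j0" "x i0 = x j0" and inj: "inj_on x {..<j0}"
    by (rule first_repetition)
  define l where "l = j0 - i0"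
  define v where "v = (\<lambda>t. x (i0 + t))"
  have l: "3 \<le> l"
  proof (rule ccontr)
    assume "\<not> 3 \<le> l"
    then have "j0 = Suc i0 \<or> j0 = Suc (Suc i0)" using i0 unfolding l_def by auto
    then show False
    proof
      assume "j0 = Suc i0"
      then have "card {x i0, x (Suc i0)} = 1" using i0 by simp
      then show False using two edge[of i0] by auto
    next
      assume "j0 = Suc (Suc i0)"
      then show False using spec[OF walk, of i0] i0 by simp
    qed
  qed
  have "inj_on v {..<l}"
  proof (rule inj_onI)
    fix p q assume "p \<in> {..<l}" "q \<in> {..<l}" "v p = v q"
    then show "p = q" using inj_onD[OF inj, of "i0 + p" "i0 + q"] unfolding v_def l_def by auto
  qed
  moreover have "cycle_edge l v t \<in> S" if "t < l" for t
  proof (cases "Suc t < l")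
    case True then show ?thesis using edge[of "i0 + t"] by (simp add: v_def cycle_edge_def)
  next
    case False
    then have "Suc t = l" using that by auto
    then have "Suc (i0 + t) = j0" using i0 unfolding l_def by simp
    then show ?thesis using edge[of "i0 + t"] i0 \<open>Suc t = l\<close>
      by (simp add: v_def cycle_edge_def insert_commute)
  qed
  ultimately have "has_cycle_len S l" using l unfolding has_cycle_len_iff by blast
  then show ?thesis using l cycle_len_le_card fin by blast
qed

lemma has_cycle_len_if_no_leaf:
  assumes "finite S" "S \<noteq> {}" "\<forall>e\<in>S. card e = 2"
    and "\<forall>e\<in>S. \<forall>x\<in>e. \<exists>e'\<in>S. x \<in> e' \<and> e' \<noteq> e"
  shows "\<exists>l. 3 \<le> l \<and> l \<le> card S \<and> has_cycle_len S l"
proof -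
  obtain e0 where "e0 \<in> S" using assms(2) by blast
  from nonbacktracking_walk_if_no_leaf[OF this assms(3,4)]
  obtain x where "\<forall>n. {x n, x (Suc n)} \<in> S \<and> x (Suc (Suc n)) \<noteq> x n" ..
  then show ?thesis by (rule has_cycle_len_if_nonbacktracking_walk[OF assms(1,3)])
qed

lemma has_cycle_len_if_even_degree:
  assumes "finite S" "S \<noteq> {}" "\<forall>e\<in>S. card e = 2" and even: "\<And>x. even (card {e\<in>S. x \<in> e})"
  shows "\<exists>l. 3 \<le> l \<and> l \<le> card S \<and> has_cycle_len S l"
proof (rule has_cycle_len_if_no_leaf[OF assms(1-3)], intro ballI, rule ccontr)
  fix e x assume "e \<in> S" "x \<in> e" "\<not> (\<exists>e'\<in>S. x \<in> e' \<and> e' \<noteq> e)"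
  then have "{e'\<in>S. x \<in> e'} = {e}" by blast
  then show False using even[of x] by simp
qed

lemma card_less_card_Union_if_acyclic:
  assumes "finite F" "\<forall>e\<in>F. card e = 2" "\<forall>l. \<not> has_cycle_len F l" "F \<noteq> {}"
  shows "card F < card (\<Union>F)"
  using assms
proof (induction "card F" arbitrary: F rule: less_induct)
  case less
  have finU: "finite (\<Union>F)" using finite_Union_if_card_2 less.prems(1,2) .
  obtain e x where ex: "e \<in> F" "x \<in> e" and leaf: "\<forall>e'\<in>F. x \<in> e' \<longrightarrow> e' = e"
    using has_cycle_len_if_no_leaf[OF less.prems(1,4,2)] less.prems(3) by blast
  define F' where "F' = F - {e}"
  have cF: "card F = Suc (card F')"
    unfolding F'_def using card_Suc_Diff1[OF less.prems(1) ex(1)] by simp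
  show ?case
  proof (cases "F' = {}")
    case True
    then have "F = {e}" using ex unfolding F'_def by blast
    then show ?thesis using less.prems(2) by simp
  next
    case False
    have "card F' < card (\<Union>F')"
    proof (rule less.hyps)
      show "card F' < card F" "F' \<noteq> {}" using cF False by simp_all
      show "finite F'" "\<forall>e\<in>F'. card e = 2" using less.prems(1,2) unfolding F'_def by simp_all
      show "\<forall>l. \<not> has_cycle_len F' l"
        using less.prems(3) has_cycle_len_mono[of F' _ F] unfolding F'_def by blast
    qed
    moreover have "card (\<Union>F') \<le> card (\<Union>F - {x})"
      using leaf finU unfolding F'_def by (intro card_mono) auto
    moreover have "x \<in> \<Union>F" using ex by blast
    ultimately show ?thesis using cF finU by (simp add: card_gt_0_iff)
  qed
qed

lemma card_le_card_Union_if_acyclic: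
  assumes "finite F" "\<forall>e\<in>F. card e = 2" "\<forall>l. \<not> has_cycle_len F l"
  shows "card F \<le> card (\<Union>F)"
  using card_less_card_Union_if_acyclic[OF assms] by (cases "F = {}") auto

section \<open>Closed trails\<close>

definition closed_trail :: "nat set set \<Rightarrow> nat \<Rightarrow> (nat \<Rightarrow> nat) \<Rightarrow> bool" where
  "closed_trail E L w \<longleftrightarrow> 3 \<le> L \<and> (\<forall>i<L. cycle_edge L w i \<in> E) \<and> inj_on (cycle_edge L w) {..<L}"

definition cycle_edges :: "nat \<Rightarrow> (nat \<Rightarrow> nat) \<Rightarrow> nat set set" where
  "cycle_edges L w = cycle_edge L w ` {..<L}"

definition cycle_verts :: "nat \<Rightarrow> (nat \<Rightarrow> nat) \<Rightarrow> nat set" where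
  "cycle_verts L w = w ` {..<L}"

lemma closed_trail_mono: "closed_trail E L w \<Longrightarrow> cycle_edges L w \<subseteq> E' \<Longrightarrow> closed_trail E' L w"
  unfolding closed_trail_def cycle_edges_def by blast

lemma cycle_edges_subset: "closed_trail E L w \<Longrightarrow> cycle_edges L w \<subseteq> E"
  unfolding closed_trail_def cycle_edges_def by blast

lemma card_cycle_edges: "closed_trail E L w \<Longrightarrow> card (cycle_edges L w) = L"
  unfolding closed_trail_def cycle_edges_def by (simp add: card_image)

lemma cycle_edge_subset_verts: "closed_trail E L w \<Longrightarrow> e \<in> cycle_edges L w \<Longrightarrow> e \<subseteq> cycle_verts L w"
  unfolding closed_trail_def cycle_edges_def cycle_verts_def cycle_edge_def
  by (auto intro!: imageI)

lemma closed_trail_of_cycle: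
  assumes "has_cycle_len F l" obtains v where "closed_trail F l v"
  using assms inj_on_cycle_edge unfolding has_cycle_len_iff closed_trail_def by blast

lemma image_mod_shift_lessThan:
  fixes L s :: nat
  assumes "s < L"
  shows "(\<lambda>i. (i + s) mod L) ` {..<L} = {..<L}"
proof
  show "(\<lambda>i. (i + s) mod L) ` {..<L} \<subseteq> {..<L}" using assms by auto
  show "{..<L} \<subseteq> (\<lambda>i. (i + s) mod L) ` {..<L}"
  proof
    fix j assume j: "j \<in> {..<L}"
    show "j \<in> (\<lambda>i. (i + s) mod L) ` {..<L}"
    proof (rule image_eqI)
      have "((j + (L - s)) mod L + s) mod L = (j + L) mod L"
        using assms by (simp add: mod_add_left_eq)
      also have "\<dots> = j" using j by simp
      finally show "j = ((j + (L - s)) mod L + s) mod L" ..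
      show "(j + (L - s)) mod L \<in> {..<L}" using assms by simp
    qed
  qed
qed

lemma closed_trail_rotate:
  assumes tr: "closed_trail E L w" and s: "s < L"
  defines "w' \<equiv> \<lambda>i. w ((i + s) mod L)"
  shows "closed_trail E L w'" "cycle_edges L w' = cycle_edges L w"
    "cycle_verts L w' = cycle_verts L w" "w' 0 = w s"
proof -
  define r where "r i = (i + s) mod L" for i
  have rim: "r ` {..<L} = {..<L}" unfolding r_def by (rule image_mod_shift_lessThan[OF s])
  have edge: "cycle_edge L w' = cycle_edge L w \<circ> r"
  proof
    fix i
    have "(Suc i mod L + s) mod L = Suc ((i + s) mod L) mod L"
      by (simp add: mod_add_left_eq mod_Suc_eq)
    then show "cycle_edge L w' i = (cycle_edge L w \<circ> r) i"
      by (simp add: cycle_edge_def w'_def r_def)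
  qed
  have "inj_on r {..<L}" using rim by (intro eq_card_imp_inj_on) auto
  then show "closed_trail E L w'"
    using tr rim unfolding closed_trail_def edge by (auto intro: comp_inj_on)
  show "cycle_edges L w' = cycle_edges L w"
    unfolding cycle_edges_def edge image_comp[symmetric] rim ..
  have "w' = w \<circ> r" unfolding w'_def r_def by auto
  then show "cycle_verts L w' = cycle_verts L w"
    unfolding cycle_verts_def by (simp only: image_comp[symmetric] rim)
  show "w' 0 = w s" unfolding w'_def using s by simp
qed

lemma lessThan_add_eq: "{..<a + b} = {..<a} \<union> (\<lambda>j. a + j) ` {..<b}" for a b :: nat
proof (rule set_eqI, rule iffI)
  fix i assume i: "i \<in> {..<a + b}"
  show "i \<in> {..<a} \<union> (\<lambda>j. a + j) ` {..<b}"
  proof (cases "i < a")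
    case False
    then have "i = a + (i - a)" "i - a \<in> {..<b}" using i by auto
    then show ?thesis by blast
  qed simp
qed auto

lemma cycle_edge_append:
  assumes L: "0 < L1" "0 < L2" and x: "w1 0 = w2 0" and i: "i < L1 + L2"
  defines "w \<equiv> \<lambda>i. if i < L1 then w1 i else w2 (i - L1)"
  shows "cycle_edge (L1 + L2) w i =
    (if i < L1 then cycle_edge L1 w1 i else cycle_edge L2 w2 (i - L1))"
proof (cases "i < L1")
  case True
  then show ?thesis
  proof (cases "Suc i < L1")
    case False
    then have "Suc i = L1" using True by simp
    then show ?thesis using True L x unfolding cycle_edge_def w_def by simp
  qed (simp add: cycle_edge_def w_def)
next
  case False
  show ?thesis
  proof (cases "Suc i < L1 + L2")
    case True
    then have "Suc (i - L1) < L2" "Suc i - L1 = Suc (i - L1)" using False by auto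
    then show ?thesis using True False unfolding cycle_edge_def w_def by simp
  next
    case False2: False
    then have "Suc i = L1 + L2" "Suc (i - L1) = L2" using i False by auto
    then show ?thesis using False L x unfolding cycle_edge_def w_def by simp
  qed
qed

lemma closed_trail_append:
  assumes t1: "closed_trail E L1 w1" and t2: "closed_trail E L2 w2" and x: "w1 0 = w2 0"
    and dj: "cycle_edges L1 w1 \<inter> cycle_edges L2 w2 = {}"
  defines "w \<equiv> \<lambda>i. if i < L1 then w1 i else w2 (i - L1)"
  shows "closed_trail E (L1 + L2) w"
    "cycle_edges (L1 + L2) w = cycle_edges L1 w1 \<union> cycle_edges L2 w2"
    "cycle_verts (L1 + L2) w = cycle_verts L1 w1 \<union> cycle_verts L2 w2"
proof -
  have L: "0 < L1" "0 < L2" "3 \<le> L1" using t1 t2 unfolding closed_trail_def by auto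
  note edge = cycle_edge_append[of L1 L2 w1 w2, OF L(1,2) x, folded w_def]
  have "cycle_edge (L1 + L2) w ` {..<L1} = cycle_edge L1 w1 ` {..<L1}"
    using edge by (intro image_cong) simp_all
  moreover have "cycle_edge (L1 + L2) w ` (\<lambda>j. L1 + j) ` {..<L2} = cycle_edge L2 w2 ` {..<L2}"
    unfolding image_image using edge by (intro image_cong) simp_all
  ultimately show edges: "cycle_edges (L1 + L2) w = cycle_edges L1 w1 \<union> cycle_edges L2 w2"
    unfolding cycle_edges_def lessThan_add_eq image_Un by simp
  have "w ` {..<L1} = w1 ` {..<L1}" by (rule image_cong) (auto simp: w_def)
  moreover have "w ` (\<lambda>j. L1 + j) ` {..<L2} = w2 ` {..<L2}"
    unfolding image_image by (rule image_cong) (auto simp: w_def)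
  ultimately show "cycle_verts (L1 + L2) w = cycle_verts L1 w1 \<union> cycle_verts L2 w2"
    unfolding cycle_verts_def lessThan_add_eq image_Un by simp
  have "card (cycle_edges (L1 + L2) w) = L1 + L2"
    using edges card_cycle_edges[OF t1] card_cycle_edges[OF t2] dj
    by (simp add: card_Un_disjoint cycle_edges_def)
  then have "inj_on (cycle_edge (L1 + L2) w) {..<L1 + L2}"
    unfolding cycle_edges_def by (intro eq_card_imp_inj_on) auto
  moreover have "cycle_edges (L1 + L2) w \<subseteq> E"
    using edges cycle_edges_subset[OF t1] cycle_edges_subset[OF t2] by simp
  then have "\<forall>i<L1 + L2. cycle_edge (L1 + L2) w i \<in> E" unfolding cycle_edges_def by auto
  ultimately show "closed_trail E (L1 + L2) w" using L unfolding closed_trail_def by auto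
qed

text \<open>A closed trail as a pair of its length and its vertex sequence.\<close>

type_synonym ctrail = "nat \<times> (nat \<Rightarrow> nat)"

definition ct_verts :: "ctrail \<Rightarrow> nat set" where "ct_verts t = cycle_verts (fst t) (snd t)"

definition ct_edges :: "ctrail \<Rightarrow> nat set set" where "ct_edges t = cycle_edges (fst t) (snd t)"

definition is_ctrail :: "nat set set \<Rightarrow> ctrail \<Rightarrow> bool" where
  "is_ctrail E t = closed_trail E (fst t) (snd t)"

text \<open>Rotate two closed trails to start at a common vertex and concatenate them.\<close>

definition ct_join :: "ctrail \<Rightarrow> ctrail \<Rightarrow> ctrail" where
  "ct_join t1 t2 = (let x = SOME x. x \<in> ct_verts t1 \<inter> ct_verts t2;
      s1 = SOME s. s < fst t1 \<and> snd t1 s = x; s2 = SOME s. s < fst t2 \<and> snd t2 s = x;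
      w1 = (\<lambda>i. snd t1 ((i + s1) mod fst t1)); w2 = (\<lambda>i. snd t2 ((i + s2) mod fst t2))
    in (fst t1 + fst t2, \<lambda>i. if i < fst t1 then w1 i else w2 (i - fst t1)))"

lemma ct_join_props:
  assumes "is_ctrail E t1" "is_ctrail E t2" "ct_verts t1 \<inter> ct_verts t2 \<noteq> {}"
    "ct_edges t1 \<inter> ct_edges t2 = {}"
  shows "is_ctrail E (ct_join t1 t2)" "ct_edges (ct_join t1 t2) = ct_edges t1 \<union> ct_edges t2"
    "ct_verts (ct_join t1 t2) = ct_verts t1 \<union> ct_verts t2" "fst (ct_join t1 t2) = fst t1 + fst t2"
proof -
  obtain L1 w1 L2 w2 where t: "t1 = (L1, w1)" "t2 = (L2, w2)" by fastforce
  define x where "x = (SOME x. x \<in> ct_verts t1 \<inter> ct_verts t2)"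
  have x: "x \<in> ct_verts t1 \<inter> ct_verts t2" unfolding x_def
    using assms(3) by (metis ex_in_conv someI_ex)
  define s1 where "s1 = (SOME s. s < L1 \<and> w1 s = x)"
  define s2 where "s2 = (SOME s. s < L2 \<and> w2 s = x)"
  have s1: "s1 < L1 \<and> w1 s1 = x" unfolding s1_def
    by (rule someI_ex) (use x t in \<open>auto simp: ct_verts_def cycle_verts_def\<close>)
  have s2: "s2 < L2 \<and> w2 s2 = x" unfolding s2_def
    by (rule someI_ex) (use x t in \<open>auto simp: ct_verts_def cycle_verts_def\<close>)
  define v1 where "v1 = (\<lambda>i. w1 ((i + s1) mod L1))"
  define v2 where "v2 = (\<lambda>i. w2 ((i + s2) mod L2))"
  have eq: "ct_join t1 t2 = (L1 + L2, \<lambda>i. if i < L1 then v1 i else v2 (i - L1))"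
    unfolding ct_join_def Let_def x_def[symmetric] unfolding t fst_conv snd_conv
      s1_def[symmetric] s2_def[symmetric] v1_def v2_def ..
  have tr1: "closed_trail E L1 w1" and tr2: "closed_trail E L2 w2"
    using assms(1,2) t by (auto simp: is_ctrail_def)
  note r1 = closed_trail_rotate[OF tr1, of s1, folded v1_def, OF conjunct1[OF s1]]
  note r2 = closed_trail_rotate[OF tr2, of s2, folded v2_def, OF conjunct1[OF s2]]
  have dj: "cycle_edges L1 v1 \<inter> cycle_edges L2 v2 = {}"
    using assms(4) r1(2) r2(2) t by (auto simp: ct_edges_def)
  have x0: "v1 0 = v2 0" using s1 s2 by (simp add: v1_def v2_def)
  note sp = closed_trail_append[OF r1(1) r2(1) x0 dj]
  show "is_ctrail E (ct_join t1 t2)" "ct_edges (ct_join t1 t2) = ct_edges t1 \<union> ct_edges t2"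
    "ct_verts (ct_join t1 t2) = ct_verts t1 \<union> ct_verts t2" "fst (ct_join t1 t2) = fst t1 + fst t2"
    using sp eq r1(2,3) r2(2,3) t by (simp_all add: is_ctrail_def ct_edges_def ct_verts_def)
qed

fun ct_insert :: "ctrail \<Rightarrow> ctrail list \<Rightarrow> ctrail list" where
  "ct_insert W [] = [W]"
| "ct_insert W (t # ts) =
    (if ct_verts W \<inter> ct_verts t \<noteq> {} then ct_insert (ct_join W t) ts else t # ct_insert W ts)"

fun disjoint_ctrails :: "ctrail list \<Rightarrow> bool" where
  "disjoint_ctrails [] = True"
| "disjoint_ctrails (t # ts) = ((\<forall>u\<in>set ts. ct_verts t \<inter> ct_verts u = {}) \<and> disjoint_ctrails ts)"

lemma ct_edges_disjoint:
  assumes "is_ctrail E t" "is_ctrail E u" "ct_verts t \<inter> ct_verts u = {}"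
  shows "ct_edges t \<inter> ct_edges u = {}"
proof (rule ccontr)
  assume "ct_edges t \<inter> ct_edges u \<noteq> {}"
  then obtain e where e: "e \<in> ct_edges t" "e \<in> ct_edges u" by blast
  then have "e \<subseteq> ct_verts t" "e \<subseteq> ct_verts u"
    using cycle_edge_subset_verts assms(1,2)
      unfolding is_ctrail_def ct_edges_def ct_verts_def by blast+
  moreover have "e \<noteq> {}" using e(1) unfolding ct_edges_def cycle_edges_def cycle_edge_def by auto
  ultimately show False using assms(3) by blast
qed

lemma ct_insert_props:
  assumes "is_ctrail E W" "\<forall>t\<in>set ts. is_ctrail E t" "disjoint_ctrails ts"
    "\<forall>t\<in>set ts. ct_edges W \<inter> ct_edges t = {}"
  shows "(\<forall>t\<in>set (ct_insert W ts). is_ctrail E t) \<and> disjoint_ctrails (ct_insert W ts)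
    \<and> sum_list (map fst (ct_insert W ts)) = fst W + sum_list (map fst ts)
    \<and> \<Union>(ct_verts ` set (ct_insert W ts)) = ct_verts W \<union> \<Union>(ct_verts ` set ts)"
  using assms
proof (induction ts arbitrary: W)
  case Nil then show ?case by simp
next
  case (Cons t ts)
  show ?case
  proof (cases "ct_verts W \<inter> ct_verts t \<noteq> {}")
    case True
    have edges_disjoint: "ct_edges W \<inter> ct_edges t = {}" using Cons.prems by simp
    note join = ct_join_props[OF Cons.prems(1) _ True edges_disjoint]
    have t_trail: "is_ctrail E t" using Cons.prems by simp
    have "\<forall>u\<in>set ts. ct_edges (ct_join W t) \<inter> ct_edges u = {}"
    proof
      fix u assume u: "u \<in> set ts"
      have "ct_edges t \<inter> ct_edges u = {}"
        using ct_edges_disjoint[OF t_trail, of u] Cons.prems u by auto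
      then show "ct_edges (ct_join W t) \<inter> ct_edges u = {}"
        using join(2)[OF t_trail] Cons.prems(4) u by auto
    qed
    then have IH: "(\<forall>t\<in>set (ct_insert (ct_join W t) ts). is_ctrail E t)
      \<and> disjoint_ctrails (ct_insert (ct_join W t) ts)
      \<and> sum_list (map fst (ct_insert (ct_join W t) ts)) = fst (ct_join W t) + sum_list (map fst ts)
      \<and> \<Union>(ct_verts ` set (ct_insert (ct_join W t) ts)) =
          ct_verts (ct_join W t) \<union> \<Union>(ct_verts ` set ts)"
      using Cons.IH[OF join(1)[OF t_trail]] Cons.prems by simp
    show ?thesis using IH True join(3,4)[OF t_trail] by auto
  next
    case False
    have IH: "(\<forall>t\<in>set (ct_insert W ts). is_ctrail E t) \<and> disjoint_ctrails (ct_insert W ts)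
      \<and> sum_list (map fst (ct_insert W ts)) = fst W + sum_list (map fst ts)
      \<and> \<Union>(ct_verts ` set (ct_insert W ts)) = ct_verts W \<union> \<Union>(ct_verts ` set ts)"
      using Cons.IH[OF Cons.prems(1)] Cons.prems by simp
    have "\<forall>u\<in>set (ct_insert W ts). ct_verts t \<inter> ct_verts u = {}"
    proof
      fix u assume "u \<in> set (ct_insert W ts)"
      then have "ct_verts u \<subseteq> ct_verts W \<union> \<Union>(ct_verts ` set ts)" using IH by blast
      then show "ct_verts t \<inter> ct_verts u = {}" using False Cons.prems(3) by auto
    qed
    then show ?thesis using IH False Cons.prems by auto
  qed
qed

lemma card_Union_ct_verts: "disjoint_ctrails ts \<Longrightarrow> (\<forall>t\<in>set ts. finite (ct_verts t)) \<Longrightarrow>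
  sum_list (map (\<lambda>t. card (ct_verts t)) ts) = card (\<Union>(ct_verts ` set ts))"
proof (induction ts)
  case Nil then show ?case by simp
next
  case (Cons t ts)
  have "ct_verts t \<inter> \<Union>(ct_verts ` set ts) = {}" using Cons.prems by auto
  moreover have "finite (\<Union>(ct_verts ` set ts))" using Cons.prems by auto
  ultimately show ?case using Cons by (simp add: card_Un_disjoint)
qed

lemma ct_verts_subset_Union: "is_ctrail F t \<Longrightarrow> ct_verts t \<subseteq> \<Union>F"
proof
  fix y assume a: "is_ctrail F t" "y \<in> ct_verts t"
  then obtain i where i: "i < fst t" "y = snd t i" unfolding ct_verts_def cycle_verts_def by auto
  have "cycle_edge (fst t) (snd t) i \<in> F"
    using a(1) i unfolding is_ctrail_def closed_trail_def by auto
  then show "y \<in> \<Union>F" using i unfolding cycle_edge_def by auto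
qed

lemma exists_disjoint_ctrails:
  assumes "finite F" "\<forall>e\<in>F. card e = 2"
  shows "\<exists>ts. (\<forall>t\<in>set ts. is_ctrail F t) \<and> disjoint_ctrails ts
    \<and> card F \<le> sum_list (map fst ts) + card (\<Union>F)"
  using assms
proof (induction "card F" arbitrary: F rule: less_induct)
  case less
  show ?case
  proof (cases "\<exists>l. has_cycle_len F l")
    case False
    then have "card F \<le> card (\<Union>F)" using card_le_card_Union_if_acyclic[OF less.prems] by blast
    then show ?thesis by (intro exI[of _ "[]"]) simp
  next
    case True
    then obtain l v where v: "closed_trail F l v" using closed_trail_of_cycle by metis
    define F' where "F' = F - cycle_edges l v"
    have sub: "cycle_edges l v \<subseteq> F" using cycle_edges_subset[OF v] .
    have fin': "finite F'" using less.prems unfolding F'_def by simp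
    have cF: "card F = card F' + l"
      using card_Diff_subset[OF finite_subset[OF sub less.prems(1)] sub]
        card_mono[OF less.prems(1) sub] card_cycle_edges[OF v] unfolding F'_def by linarith
    have l3: "3 \<le> l" using v unfolding closed_trail_def by simp
    obtain ts where ts: "\<forall>t\<in>set ts. is_ctrail F' t" "disjoint_ctrails ts"
      "card F' \<le> sum_list (map fst ts) + card (\<Union>F')"
      using less.hyps[of F'] cF l3 fin' less.prems(2) unfolding F'_def by auto
    have ts_trails: "\<forall>t\<in>set ts. is_ctrail F t" using ts(1) unfolding is_ctrail_def F'_def
      using closed_trail_mono cycle_edges_subset by blast
    have trail_lv: "is_ctrail F (l, v)" using v by (simp add: is_ctrail_def)
    have disjoint_W: "\<forall>t\<in>set ts. ct_edges (l, v) \<inter> ct_edges t = {}"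
    proof
      fix t assume "t \<in> set ts"
      then have "ct_edges t \<subseteq> F'"
        using ts(1) cycle_edges_subset unfolding is_ctrail_def ct_edges_def by blast
      then show "ct_edges (l, v) \<inter> ct_edges t = {}" unfolding F'_def ct_edges_def by auto
    qed
    note inserted = ct_insert_props[OF trail_lv ts_trails ts(2) disjoint_W]
    have "card (\<Union>F') \<le> card (\<Union>F)"
      using finite_Union_if_card_2[OF less.prems] unfolding F'_def by (intro card_mono) auto
    then have "card F \<le> sum_list (map fst (ct_insert (l, v) ts)) + card (\<Union>F)"
      using inserted ts(3) cF by simp
    then show ?thesis using inserted by blast
  qed
qed

lemma exists_le_ratio_of_sum_list:
  fixes a b :: "'a \<Rightarrow> nat"
  assumes "0 < M" "M \<le> (\<Sum>t\<leftarrow>ts. a t)" "(\<Sum>t\<leftarrow>ts. b t) \<le> N"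
  shows "\<exists>t\<in>set ts. M * b t \<le> a t * N"
proof (rule ccontr)
  assume "\<not> ?thesis"
  then have lt: "\<forall>t\<in>set ts. a t * N < M * b t" by (simp add: not_le)
  have "ts \<noteq> []" using assms(1,2) by auto
  then have "(\<Sum>t\<leftarrow>ts. a t * N) < (\<Sum>t\<leftarrow>ts. M * b t)"
    using lt by (intro sum_list_strict_mono) auto
  also have "\<dots> \<le> M * N" using assms(3) by (simp add: sum_list_const_mult)
  also have "\<dots> \<le> (\<Sum>t\<leftarrow>ts. a t * N)" using assms(2) by (simp add: sum_list_mult_const)
  finally show False by simp
qed

text \<open>The cycles of a graph can be merged into vertex-disjoint closed trails covering all but
  at most N of its edges; one of them has at least the average ratio of edges to vertices.\<close>

lemma exists_dense_closed_trail:
  assumes fin: "finite E" and two: "\<forall>e\<in>E. card e = 2" and VN: "\<Union>E \<subseteq> {..<N}"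
    and mN: "N < card E"
  shows "\<exists>L w. closed_trail E L w \<and> (card E - N) * card (cycle_verts L w) \<le> L * N"
proof -
  obtain ts where ts: "\<forall>t\<in>set ts. is_ctrail E t" "disjoint_ctrails ts"
    "card E \<le> (\<Sum>t\<leftarrow>ts. fst t) + card (\<Union>E)"
    using exists_disjoint_ctrails[OF fin two] by blast
  have cU: "card (\<Union>E) \<le> N" using VN by (metis card_lessThan card_mono finite_lessThan)
  have "card (\<Union>(ct_verts ` set ts)) \<le> card (\<Union>E)"
    using ts(1) ct_verts_subset_Union finite_Union_if_card_2[OF fin two] by (intro card_mono) blast+
  then have "(\<Sum>t\<leftarrow>ts. card (ct_verts t)) \<le> N"
    using card_Union_ct_verts[OF ts(2)] cU by (simp add: ct_verts_def cycle_verts_def)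
  moreover have "card E - N \<le> (\<Sum>t\<leftarrow>ts. fst t)" "0 < card E - N" using ts(3) cU mN by auto
  ultimately obtain t where "t \<in> set ts" "(card E - N) * card (ct_verts t) \<le> fst t * N"
    using exists_le_ratio_of_sum_list by blast
  then show ?thesis using ts(1) unfolding is_ctrail_def ct_verts_def by blast
qed

section \<open>Truncated graph distance\<close>

definition walk :: "nat set set \<Rightarrow> nat \<Rightarrow> nat \<Rightarrow> nat \<Rightarrow> bool" where
  "walk E x y j \<longleftrightarrow> (\<exists>w. w 0 = x \<and> w j = y \<and> (\<forall>i<j. {w i, w (Suc i)} \<in> E))"

definition tdist :: "nat set set \<Rightarrow> nat \<Rightarrow> nat \<Rightarrow> nat \<Rightarrow> nat" where
  "tdist E K x y = (LEAST j. j = K \<or> walk E x y j)"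

lemma tdist_le: "tdist E K x y \<le> K"
  unfolding tdist_def by (rule Least_le) simp

lemma tdist_le_walk: "walk E x y j \<Longrightarrow> tdist E K x y \<le> j"
  unfolding tdist_def by (rule Least_le) simp

lemma walk_tdist: "tdist E K x y < K \<Longrightarrow> walk E x y (tdist E K x y)"
proof -
  assume a: "tdist E K x y < K"
  have "tdist E K x y = K \<or> walk E x y (tdist E K x y)" unfolding tdist_def by (rule LeastI_ex) auto
  then show ?thesis using a by simp
qed

lemma walk_refl: "walk E x x 0" unfolding walk_def by (intro exI[of _ "\<lambda>_. x"]) simp

lemma tdist_refl: "tdist E K x x = 0" using tdist_le_walk[OF walk_refl] by (metis le_zero_eq)

lemma walk_sym: "walk E x y j \<Longrightarrow> walk E y x j"
proof -
  assume "walk E x y j"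
  then obtain w where w: "w 0 = x" "w j = y" "\<forall>i<j. {w i, w (Suc i)} \<in> E"
    unfolding walk_def by blast
  define w' where "w' = (\<lambda>i. w (j - i))"
  have "\<forall>i<j. {w' i, w' (Suc i)} \<in> E"
  proof (intro allI impI)
    fix i assume i: "i < j"
    have "{w (j - Suc i), w (Suc (j - Suc i))} \<in> E" using w(3) i by simp
    moreover have "Suc (j - Suc i) = j - i" using i by simp
    ultimately show "{w' i, w' (Suc i)} \<in> E" unfolding w'_def by (simp add: insert_commute)
  qed
  moreover have "w' 0 = y" "w' j = x" using w unfolding w'_def by auto
  ultimately show ?thesis unfolding walk_def by blast
qed

lemma tdist_sym: "tdist E K x y = tdist E K y x"
proof -
  have "tdist E K x y \<le> tdist E K y x" for x y
  proof (cases "tdist E K y x < K")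
    case True then show ?thesis using walk_tdist[OF True] walk_sym tdist_le_walk by blast
  next
    case False then show ?thesis using tdist_le[of E K x y] by simp
  qed
  then show ?thesis by (metis le_antisym)
qed

lemma walk_append: "walk E x y a \<Longrightarrow> walk E y z b \<Longrightarrow> walk E x z (a + b)"
proof -
  assume "walk E x y a" "walk E y z b"
  then obtain w1 w2 where w1: "w1 0 = x" "w1 a = y" "\<forall>i<a. {w1 i, w1 (Suc i)} \<in> E"
    and w2: "w2 0 = y" "w2 b = z" "\<forall>i<b. {w2 i, w2 (Suc i)} \<in> E" unfolding walk_def by blast
  define w where "w = (\<lambda>i. if i \<le> a then w1 i else w2 (i - a))"
  have "\<forall>i<a+b. {w i, w (Suc i)} \<in> E"
  proof (intro allI impI)
    fix i assume i: "i < a + b"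
    show "{w i, w (Suc i)} \<in> E"
    proof (cases "i < a")
      case True then show ?thesis using w1(3) unfolding w_def by simp
    next
      case False
      then have "{w2 (i - a), w2 (Suc (i - a))} \<in> E" using w2(3) i by simp
      moreover have "Suc i - a = Suc (i - a)" using False by simp
      ultimately show ?thesis using False w1(2) w2(1) unfolding w_def
        by (cases "i = a") auto
    qed
  qed
  moreover have "w 0 = x" "w (a + b) = z" using w1 w2 unfolding w_def by auto
  ultimately show ?thesis unfolding walk_def by blast
qed

lemma tdist_triangle: "tdist E K x z \<le> tdist E K x y + tdist E K y z"
proof (cases "tdist E K x y < K \<and> tdist E K y z < K")
  case True
  then have "walk E x z (tdist E K x y + tdist E K y z)" using walk_tdist walk_append by blast
  then show ?thesis by (rule tdist_le_walk)
next
  case False then show ?thesis using tdist_le[of E K x z] by auto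
qed

lemma tdist_pos: "x \<noteq> y \<Longrightarrow> 0 < K \<Longrightarrow> 0 < tdist E K x y"
proof (rule ccontr)
  assume a: "x \<noteq> y" "0 < K" "\<not> 0 < tdist E K x y"
  then have "tdist E K x y < K" by simp
  then have "walk E x y 0" using walk_tdist a by fastforce
  then show False using a unfolding walk_def by auto
qed

lemma tdist_edge: "{x, y} \<in> E \<Longrightarrow> tdist E K x y \<le> 1"
proof -
  assume a: "{x, y} \<in> E"
  have "walk E x y 1" unfolding walk_def
    using a by (intro exI[of _ "\<lambda>i. if i = 0 then x else y"]) auto
  then show ?thesis by (rule tdist_le_walk)
qed

definition graph_cost :: "nat set set \<Rightarrow> nat \<Rightarrow> (nat \<Rightarrow> nat) \<Rightarrow> nat set \<Rightarrow> real" where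
  "graph_cost E K f e = real (tdist E K (f (Min e)) (f (Max e)))"

lemma graph_cost_pair: "graph_cost E K f {u, v} = real (tdist E K (f u) (f v))"
proof (cases "u \<le> v")
  case True then show ?thesis unfolding graph_cost_def by (simp add: min_def max_def)
next
  case False then show ?thesis unfolding graph_cost_def by (simp add: min_def max_def tdist_sym)
qed

lemma metric_inst_graph_cost: "metric_inst n (graph_cost E K f)"
  unfolding metric_inst_def
proof (intro conjI allI impI ballI)
  fix e show "0 \<le> graph_cost E K f e" unfolding graph_cost_def by simp
next
  fix u v w
  show "graph_cost E K f {u, w} \<le> graph_cost E K f {u, v} + graph_cost E K f {v, w}"
    unfolding graph_cost_pair using tdist_triangle[of E K "f u" "f w" "f v"] by simp
qed

lemma graph_cost_edge:
  assumes "\<forall>h\<in>E. card h = 2" "0 < K" "{f u, f v} \<in> E"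
  shows "graph_cost E K f {u, v} = 1"
proof -
  have "f u \<noteq> f v" using assms(1,3) by fastforce
  then have "0 < tdist E K (f u) (f v)" using tdist_pos assms(2) by blast
  then show ?thesis using tdist_edge[OF assms(3), of K] by (simp add: graph_cost_pair)
qed

lemma graph_cost_loop: "f u = f v \<Longrightarrow> graph_cost E K f {u, v} = 0"
  by (simp add: graph_cost_pair tdist_refl)

lemma even_sum_iff_even_card_odd:
  fixes g :: "'a \<Rightarrow> nat"
  assumes "finite X"
  shows "even (\<Sum>h\<in>X. g h) \<longleftrightarrow> even (card {h\<in>X. odd (g h)})"
  using assms
proof (induction X rule: finite_induct)
  case (insert x F)
  have "{h\<in>insert x F. odd (g h)} =
      (if odd (g x) then insert x {h\<in>F. odd (g h)} else {h\<in>F. odd (g h)})"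
    by auto
  moreover have "x \<notin> {h\<in>F. odd (g h)}" "finite {h\<in>F. odd (g h)}" using insert by simp_all
  ultimately show ?case using insert by auto
qed simp

lemma even_walk_incidences:
  assumes "\<forall>i<j. W i \<noteq> W (Suc i)"
  shows "even ((\<Sum>i<j. of_bool (x \<in> {W i, W (Suc i)}) :: nat) + of_bool (W 0 = x) + of_bool (W j = x))"
  using assms
proof (induction j)
  case (Suc j)
  let ?s = "\<lambda>j. (\<Sum>i<j. of_bool (x \<in> {W i, W (Suc i)}) :: nat) + of_bool (W 0 = x)"
  have "(of_bool (x \<in> {W j, W (Suc j)}) :: nat) = of_bool (W j = x) + of_bool (W (Suc j) = x)"
    using Suc.prems by auto
  then have eq: "?s (Suc j) + of_bool (W (Suc j) = x) =
      (?s j + of_bool (W j = x)) + 2 * of_bool (W (Suc j) = x)"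
    by simp
  have "even (?s j + of_bool (W j = x))" using Suc by simp
  then show ?case unfolding eq by (rule dvd_add) simp
qed simp

lemma sum_endpoints_eq_sum_degree:
  fixes g :: "'a \<Rightarrow> nat"
  assumes "finite X" "finite U" "\<forall>e\<in>X. e \<subseteq> U"
  shows "(\<Sum>e\<in>X. \<Sum>v\<in>e. g v) = (\<Sum>v\<in>U. g v * card {e\<in>X. v \<in> e})"
proof -
  have "(\<Sum>e\<in>X. \<Sum>v\<in>e. g v) = (\<Sum>e\<in>X. \<Sum>v\<in>U. if v \<in> e then g v else 0)"
  proof (rule sum.cong[OF refl])
    fix e assume "e \<in> X"
    then have "U \<inter> e = e" using assms by auto
    then have "(\<Sum>v\<in>e. g v) = (\<Sum>v\<in>U \<inter> e. g v)" by simp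
    also have "\<dots> = (\<Sum>v\<in>U. if v \<in> e then g v else 0)" using assms(2) by (rule sum.inter_restrict)
    finally show "(\<Sum>v\<in>e. g v) = (\<Sum>v\<in>U. if v \<in> e then g v else 0)" .
  qed
  also have "\<dots> = (\<Sum>v\<in>U. \<Sum>e\<in>X. if v \<in> e then g v else 0)" by (rule sum.swap)
  also have "\<dots> = (\<Sum>v\<in>U. g v * card {e\<in>X. v \<in> e})"
  proof (rule sum.cong[OF refl])
    fix v
    have "(\<Sum>e\<in>X. if v \<in> e then g v else 0) = (\<Sum>e\<in>{e\<in>X. v \<in> e}. g v)"
      using assms(1) by (rule sum.inter_filter[symmetric])
    then show "(\<Sum>e\<in>X. if v \<in> e then g v else 0) = g v * card {e\<in>X. v \<in> e}"
      by (simp add: mult.commute)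
  qed
  finally show ?thesis .
qed

section \<open>Tours\<close>

lemma is_tour_iff:
  "is_tour n T \<longleftrightarrow> 3 \<le> n \<and> (\<exists>p. bij_betw p {..<n} {..<n} \<and> T = cycle_edge n p ` {..<n})"
  unfolding is_tour_def cycle_edge_def by simp

lemma inj_on_tour_edges: "bij_betw p {..<n} {..<n} \<Longrightarrow> 3 \<le> n \<Longrightarrow> inj_on (cycle_edge n p) {..<n}"
  using inj_on_cycle_edge bij_betw_imp_inj_on by blast

lemma card_tour: "is_tour n T \<Longrightarrow> card T = n"
  unfolding is_tour_iff using inj_on_tour_edges card_image by fastforce

lemma tour_edge:
  assumes "is_tour n T" "e \<in> T" shows "e \<subseteq> {..<n} \<and> card e = 2"
proof -
  obtain p i where p: "bij_betw p {..<n} {..<n}" "3 \<le> n" "i < n" "e = cycle_edge n p i"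
    using assms unfolding is_tour_iff by blast
  have "i \<noteq> Suc i mod n"
  proof (cases "Suc i < n")
    case False
    then have "Suc i = n" using p(3) by simp
    then show ?thesis using p(2) by auto
  qed simp
  then have "p i \<noteq> p (Suc i mod n)"
    using bij_betw_imp_inj_on[OF p(1)] p(3) by (simp add: inj_on_eq_iff)
  moreover have "p i < n" "p (Suc i mod n) < n" using bij_betwE[OF p(1)] p(2,3) by auto
  ultimately show ?thesis using p(4) by (auto simp: cycle_edge_def)
qed

lemma finite_tours: "finite {T. is_tour n T}"
proof (rule finite_subset)
  show "{T. is_tour n T} \<subseteq> Pow (Pow {..<n})" using tour_edge by blast
qed simp

lemma finite_tour: "is_tour n T \<Longrightarrow> finite T"
  unfolding is_tour_iff by auto

lemma cycle_edges_at_vertex: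
  assumes inj: "inj_on v {..<l}" and l: "3 \<le> l" and j: "j < l"
  shows "{i\<in>{..<l}. v j \<in> cycle_edge l v i} = {j, (j + l - 1) mod l}"
proof -
  have "v j \<in> cycle_edge l v i \<longleftrightarrow> i = j \<or> Suc i mod l = j" if "i < l" for i
    using inj that j l by (auto simp: cycle_edge_def inj_on_eq_iff)
  moreover have "Suc i mod l = j \<longleftrightarrow> i = (j + l - 1) mod l" if "i < l" for i
  proof (cases "Suc i = l")
    case True then show ?thesis using j l by (cases j) auto
  next
    case False
    then have "Suc i < l" using that by simp
    then show ?thesis using j l by (cases j) (auto simp: mod_if)
  qed
  ultimately show ?thesis using j l by auto
qed

lemma tour_degree:
  assumes T: "is_tour n T" and v: "v < n"
  shows "card {e\<in>T. v \<in> e} = 2"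
proof -
  obtain p where p: "bij_betw p {..<n} {..<n}" "3 \<le> n" "T = cycle_edge n p ` {..<n}"
    using T unfolding is_tour_iff by blast
  have "v \<in> p ` {..<n}" using bij_betw_imp_surj_on[OF p(1)] v by simp
  then obtain j where j: "j < n" "p j = v" by auto
  have "{e\<in>T. v \<in> e} = cycle_edge n p ` {i\<in>{..<n}. p j \<in> cycle_edge n p i}" using p(3) j by auto
  also have "\<dots> = cycle_edge n p ` {j, (j + n - 1) mod n}"
    using cycle_edges_at_vertex[OF bij_betw_imp_inj_on[OF p(1)] p(2) j(1)] by simp
  moreover have "inj_on (cycle_edge n p) {j, (j + n - 1) mod n}"
    by (rule inj_on_subset[OF inj_on_tour_edges[OF p(1,2)]]) (use j p(2) in auto)
  ultimately have "card {e\<in>T. v \<in> e} = card {j, (j + n - 1) mod n}"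
    by (simp only: card_image)
  also have "\<dots> = 2" using j p(2) by (cases j) (auto simp: mod_if)
  finally show ?thesis .
qed

lemma tour_len_reindex:
  assumes "bij_betw p {..<n} {..<n}" "3 \<le> n"
  shows "tour_len c (cycle_edge n p ` {..<n}) = (\<Sum>i<n. c (cycle_edge n p i))"
  unfolding tour_len_def using inj_on_tour_edges[OF assms] by (simp add: sum.reindex)

lemma OPT_le: "is_tour n T \<Longrightarrow> OPT n c \<le> tour_len c T"
  unfolding OPT_def using finite_tours by (intro Min_le) auto

lemma OPT_attained: "3 \<le> n \<Longrightarrow> \<exists>T. is_tour n T \<and> OPT n c = tour_len c T"
proof -
  assume n: "3 \<le> n"
  have "is_tour n (cycle_edge n id ` {..<n})" unfolding is_tour_iff using n by auto
  then have ne: "tour_len c ` {T. is_tour n T} \<noteq> {}" by blast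
  have "OPT n c \<in> tour_len c ` {T. is_tour n T}" unfolding OPT_def
    using finite_tours ne by (intro Min_in) auto
  then show ?thesis by auto
qed

lemma tour_diff_degree:
  assumes T: "is_tour n T" and T': "is_tour n T'" and v: "v < n"
  shows "card {e\<in>T - T'. v \<in> e} = card {e\<in>T' - T. v \<in> e}"
proof -
  have fin: "finite T" "finite T'" using finite_tour T T' by auto
  have "card {e\<in>T. v \<in> e} = card {e\<in>T \<inter> T'. v \<in> e} + card {e\<in>T - T'. v \<in> e}"
    using fin by (subst card_Un_disjoint[symmetric]) (auto intro: arg_cong[where f = card])
  moreover have "card {e\<in>T'. v \<in> e} = card {e\<in>T \<inter> T'. v \<in> e} + card {e\<in>T' - T. v \<in> e}"
    using fin by (subst card_Un_disjoint[symmetric]) (auto intro: arg_cong[where f = card])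
  ultimately show ?thesis using tour_degree[OF T v] tour_degree[OF T' v] by simp
qed

lemma tour_diff_sum_endpoints:
  fixes g :: "nat \<Rightarrow> nat"
  assumes T: "is_tour n T" and T': "is_tour n T'"
  shows "(\<Sum>e\<in>T - T'. \<Sum>v\<in>e. g v) = (\<Sum>e\<in>T' - T. \<Sum>v\<in>e. g v)"
proof -
  have fin: "finite (T - T')" "finite (T' - T)" using finite_tour T T' by auto
  have sub: "\<forall>e\<in>T - T'. e \<subseteq> {..<n}" "\<forall>e\<in>T' - T. e \<subseteq> {..<n}"
    using tour_edge[OF T] tour_edge[OF T'] by auto
  have "(\<Sum>e\<in>T - T'. \<Sum>v\<in>e. g v) = (\<Sum>v<n. g v * card {e\<in>T - T'. v \<in> e})"
    by (rule sum_endpoints_eq_sum_degree[OF fin(1) _ sub(1)]) simp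
  also have "\<dots> = (\<Sum>v<n. g v * card {e\<in>T' - T. v \<in> e})"
    using tour_diff_degree[OF T T'] by simp
  also have "\<dots> = (\<Sum>e\<in>T' - T. \<Sum>v\<in>e. g v)"
    by (rule sum_endpoints_eq_sum_degree[OF fin(2) _ sub(2), symmetric]) simp
  finally show ?thesis .
qed

section \<open>Improving moves yield short cycles\<close>

lemma graph_cost_tour_edge:
  assumes two: "\<forall>h\<in>E. card h = 2" and k: "0 < k" and T: "is_tour n T"
    and hT: "\<forall>e\<in>T. f ` e \<in> E \<or> card (f ` e) = 1" and e: "e \<in> T"
  shows "graph_cost E k f e = of_bool (f ` e \<in> E)"
proof -
  obtain u v where uv: "e = {u, v}" using tour_edge[OF T e] unfolding card_2_iff by blast
  show ?thesis
  proof (cases "f ` e \<in> E")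
    case True then show ?thesis using graph_cost_edge[OF two k] uv by simp
  next
    case False
    then have "card {f u, f v} = 1" using hT e uv by auto
    then have "f u = f v" by (cases "f u = f v") auto
    then show ?thesis using False uv graph_cost_loop by simp
  qed
qed

lemma improving_move_gain:
  assumes two: "\<forall>h\<in>E. card h = 2" and k: "0 < k" and T: "is_tour n T"
    and hT: "\<forall>e\<in>T. f ` e \<in> E \<or> card (f ` e) = 1"
    and T': "is_tour n T'" and ck: "card (T - T') \<le> k"
    and lt: "tour_len (graph_cost E k f) T' < tour_len (graph_cost E k f) T"
  shows "(\<Sum>a\<in>T' - T. tdist E k (f (Min a)) (f (Max a))) < card {e\<in>T - T'. f ` e \<in> E}"
    and "card {e\<in>T - T'. f ` e \<in> E} \<le> k"
proof -
  define c where "c = graph_cost E k f"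
  have fin: "finite T" "finite T'" using finite_tour T T' by auto
  have "sum c (T - T') = (\<Sum>e\<in>T - T'. of_bool (f ` e \<in> E))"
    using graph_cost_tour_edge[OF two k T hT] unfolding c_def by (intro sum.cong) auto
  also have "\<dots> = real (card {e\<in>T - T'. f ` e \<in> E})"
    using fin by (simp add: of_bool_def sum.inter_filter[of "T - T'", symmetric])
  finally have removed: "sum c (T - T') = real (card {e\<in>T - T'. f ` e \<in> E})" .
  have added: "sum c (T' - T) = real (\<Sum>a\<in>T' - T. tdist E k (f (Min a)) (f (Max a)))"
    unfolding c_def graph_cost_def by simp
  have "tour_len c T = sum c (T \<inter> T') + sum c (T - T')"
    "tour_len c T' = sum c (T \<inter> T') + sum c (T' - T)"
    unfolding tour_len_def using sum.Int_Diff fin by (metis Int_commute)+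
  then show "(\<Sum>a\<in>T' - T. tdist E k (f (Min a)) (f (Max a))) < card {e\<in>T - T'. f ` e \<in> E}"
    using lt removed added unfolding c_def by linarith
  have "card {e\<in>T - T'. f ` e \<in> E} \<le> card (T - T')" using fin by (intro card_mono) auto
  then show "card {e\<in>T - T'. f ` e \<in> E} \<le> k" using ck by simp
qed

lemma sum_of_bool_eq_member:
  fixes a :: "'a"
  assumes "finite X"
  shows "(\<Sum>h\<in>X. (of_bool (a = h) :: nat)) = of_bool (a \<in> X)"
  using assms by (simp add: of_bool_def sum.delta)

text \<open>The multiplicity of h in the multiset of the images g e (e \<in> R) and the walk steps st a i
  (a \<in> A, i < len a); below, R are the removed tour edges mapped into the graph by g and st a
  are graph walks replacing the added tour edges a.\<close>

definition multiplicity ::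
    "('b \<Rightarrow> 'a) \<Rightarrow> 'b set \<Rightarrow> ('c \<Rightarrow> nat \<Rightarrow> 'a) \<Rightarrow> ('c \<Rightarrow> nat) \<Rightarrow> 'c set \<Rightarrow> 'a \<Rightarrow> nat" where
  "multiplicity g R st len A h =
     (\<Sum>e\<in>R. of_bool (g e = h)) + (\<Sum>a\<in>A. \<Sum>i<len a. of_bool (st a i = h))"

lemma sum_multiplicity:
  assumes "finite H"
  shows "(\<Sum>h\<in>H. multiplicity g R st len A h) =
    (\<Sum>e\<in>R. of_bool (g e \<in> H)) + (\<Sum>a\<in>A. \<Sum>i<len a. of_bool (st a i \<in> H))"
proof -
  have "(\<Sum>h\<in>H. \<Sum>e\<in>R. of_bool (g e = h)) = (\<Sum>e\<in>R. of_bool (g e \<in> H) :: nat)"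
    by (subst sum.swap) (simp add: sum_of_bool_eq_member[OF assms])
  moreover have "(\<Sum>h\<in>H. \<Sum>a\<in>A. \<Sum>i<len a. of_bool (st a i = h)) =
      (\<Sum>a\<in>A. \<Sum>i<len a. of_bool (st a i \<in> H) :: nat)"
    by (subst sum.swap, rule sum.cong[OF refl], subst sum.swap)
      (simp add: sum_of_bool_eq_member[OF assms])
  ultimately show ?thesis unfolding multiplicity_def sum.distrib by simp
qed

lemma odd_multiplicity_edges:
  fixes g :: "'b \<Rightarrow> 'a" and st :: "'c \<Rightarrow> nat \<Rightarrow> 'a"
  assumes finE: "finite E" and finR: "finite R"
    and g: "g ` R \<subseteq> E" "inj_on g R" and st: "\<And>a i. a \<in> A \<Longrightarrow> i < len a \<Longrightarrow> st a i \<in> E"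
    and short: "(\<Sum>a\<in>A. len a) < card R"
  defines "S \<equiv> {h\<in>E. odd (multiplicity g R st len A h)}"
  shows "S \<noteq> {}" and "card S < 2 * card R"
proof -
  let ?m = "multiplicity g R st len A"
  have tot: "(\<Sum>h\<in>E. ?m h) = card R + (\<Sum>a\<in>A. len a)"
    unfolding sum_multiplicity[OF finE] using g st by (simp add: image_subset_iff)
  have "card S \<le> (\<Sum>h\<in>S. ?m h)"
    unfolding card_eq_sum by (rule sum_mono) (auto simp: S_def odd_pos Suc_leI)
  also have "\<dots> \<le> (\<Sum>h\<in>E. ?m h)" using finE unfolding S_def by (intro sum_mono2) auto
  finally show "card S < 2 * card R" using tot short by linarith
  show "S \<noteq> {}"
  proof
    assume "S = {}"
    have "2 \<le> ?m h" if "h \<in> g ` R" for h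
    proof -
      obtain e where "e \<in> R" "h = g e" using \<open>h \<in> g ` R\<close> by blast
      then have "1 \<le> (\<Sum>e'\<in>R. of_bool (g e' = h) :: nat)"
        using finR member_le_sum[of e R "\<lambda>e'. of_bool (g e' = h) :: nat"] by simp
      then have "1 \<le> ?m h" unfolding multiplicity_def by linarith
      moreover have "even (?m h)" using \<open>S = {}\<close> g(1) that unfolding S_def by blast
      ultimately show ?thesis
        by (metis One_nat_def Suc_1 dvd_refl le_antisym not_less_eq_eq odd_one)
    qed
    then have "(\<Sum>h\<in>g ` R. 2) \<le> (\<Sum>h\<in>g ` R. ?m h)" by (rule sum_mono)
    then have "2 * card R \<le> (\<Sum>h\<in>g ` R. ?m h)" using card_image[OF g(2)] by simp
    also have "\<dots> \<le> (\<Sum>h\<in>E. ?m h)" using finE g(1) by (intro sum_mono2) auto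
    finally show False using tot short by linarith
  qed
qed

lemma tour_edge_endpoint_count:
  assumes two: "\<forall>h\<in>E. card h = 2" and T: "is_tour n T"
    and hT: "\<forall>e\<in>T. f ` e \<in> E \<or> card (f ` e) = 1" and e: "e \<in> T"
  shows "(\<Sum>v\<in>e. of_bool (f v = x) :: nat) =
    (if f ` e \<in> E then of_bool (x \<in> f ` e) else 2 * of_bool (f ` e = {x}))"
proof -
  obtain u v where uv: "e = {u, v}" "u \<noteq> v" using tour_edge[OF T e] unfolding card_2_iff by blast
  show ?thesis
  proof (cases "f ` e \<in> E")
    case True
    then have "f u \<noteq> f v" using two uv by fastforce
    then show ?thesis using True uv by auto
  next
    case False
    then have "card {f u, f v} = 1" using hT e uv by auto
    then have "f u = f v" by (cases "f u = f v") auto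
    then show ?thesis using False uv by auto
  qed
qed

text \<open>Mapped to the graph, the removed tour edges together with walks replacing the added
  ones form a closed multigraph, since T and T' have the same degrees: every vertex x is met an
  even number of times.\<close>

lemma even_incidences_of_move:
  assumes two: "\<forall>h\<in>E. card h = 2" and T: "is_tour n T" and T': "is_tour n T'"
    and hT: "\<forall>e\<in>T. f ` e \<in> E \<or> card (f ` e) = 1"
    and W: "\<And>a. a \<in> T' - T \<Longrightarrow> W a 0 = f (Min a) \<and> W a (len a) = f (Max a)
      \<and> (\<forall>i<len a. {W a i, W a (Suc i)} \<in> E)"
  shows "even ((\<Sum>e\<in>{e\<in>T - T'. f ` e \<in> E}. of_bool (x \<in> f ` e))
    + (\<Sum>a\<in>T' - T. \<Sum>i<len a. of_bool (x \<in> {W a i, W a (Suc i)})) :: nat)"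
    (is "even (?P1 + ?P2)")
proof -
  define D where "D e = (\<Sum>v\<in>e. of_bool (f v = x) :: nat)" for e
  have fin: "finite (T - T')" "finite (T' - T)" using finite_tour T T' by auto
  have "(\<Sum>e\<in>T - T'. D e) =
      (\<Sum>e\<in>T - T'. if f ` e \<in> E then of_bool (x \<in> f ` e) else 2 * of_bool (f ` e = {x}))"
    unfolding D_def using tour_edge_endpoint_count[OF two T hT] by (intro sum.cong) auto
  also have "\<dots> = ?P1 + 2 * (\<Sum>e\<in>{e\<in>T - T'. f ` e \<notin> E}. of_bool (f ` e = {x}))"
    using fin(1) by (simp add: sum.If_cases sum_distrib_left Int_def)
  finally have removed: "even (?P1 + (\<Sum>e\<in>T - T'. D e))" by simp
  have "even ((\<Sum>i<len a. of_bool (x \<in> {W a i, W a (Suc i)})) + D a)" if a: "a \<in> T' - T" for a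
  proof -
    obtain u v where uv: "a = {u, v}" "u \<noteq> v"
      using tour_edge[OF T'] a unfolding card_2_iff by blast
    have "\<forall>i<len a. W a i \<noteq> W a (Suc i)" using W[OF a] two by fastforce
    moreover have "D a = of_bool (W a 0 = x) + of_bool (W a (len a) = x)"
      using W[OF a] uv unfolding D_def by (cases "u \<le> v") (auto simp: min_def max_def)
    ultimately show ?thesis using even_walk_incidences[of "len a" "W a" x] by (simp add: add.assoc)
  qed
  then have added: "even (?P2 + (\<Sum>a\<in>T' - T. D a))"
    unfolding sum.distrib[symmetric] by (intro dvd_sum) auto
  have "(\<Sum>e\<in>T - T'. D e) = (\<Sum>a\<in>T' - T. D a)"
    unfolding D_def by (rule tour_diff_sum_endpoints[OF T T'])
  then show ?thesis using removed added by (auto simp: even_add)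
qed

lemma even_subgraph_of_improving_move:
  assumes k: "0 < k" and finE: "finite E" and two: "\<forall>h\<in>E. card h = 2"
    and T: "is_tour n T" and hT: "\<forall>e\<in>T. f ` e \<in> E \<or> card (f ` e) = 1"
    and injT: "inj_on (\<lambda>e. f ` e) {e\<in>T. f ` e \<in> E}"
    and mv: "k_move k n T T'"
    and lt: "tour_len (graph_cost E k f) T' < tour_len (graph_cost E k f) T"
  shows "\<exists>S\<subseteq>E. S \<noteq> {} \<and> card S < 2 * k \<and> (\<forall>x. even (card {h\<in>S. x \<in> h}))"
proof -
  have T': "is_tour n T'" and ck: "card (T - T') \<le> k" using mv unfolding k_move_def by auto
  define R where "R = {e\<in>T - T'. f ` e \<in> E}"
  define len where "len a = tdist E k (f (Min a)) (f (Max a))" for a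
  note gain = improving_move_gain[OF two k T hT T' ck lt, folded R_def len_def]
  have "\<forall>a\<in>T' - T. walk E (f (Min a)) (f (Max a)) (len a)"
  proof
    fix a assume "a \<in> T' - T"
    then have "len a \<le> (\<Sum>a\<in>T' - T. len a)" using finite_tour[OF T'] by (intro member_le_sum) auto
    then have "tdist E k (f (Min a)) (f (Max a)) < k" using gain unfolding len_def by linarith
    then show "walk E (f (Min a)) (f (Max a)) (len a)" unfolding len_def by (rule walk_tdist)
  qed
  from bchoice[OF this[unfolded walk_def]]
  obtain W where W: "\<forall>a\<in>T' - T. W a 0 = f (Min a) \<and> W a (len a) = f (Max a)
      \<and> (\<forall>i<len a. {W a i, W a (Suc i)} \<in> E)" ..
  define st where "st a i = {W a i, W a (Suc i)}" for a i
  define S where "S = {h\<in>E. odd (multiplicity (\<lambda>e. f ` e) R st len (T' - T) h)}"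
  have R: "finite R" "(\<lambda>e. f ` e) ` R \<subseteq> E" "inj_on (\<lambda>e. f ` e) R"
    using finite_tour[OF T] injT unfolding R_def by (auto intro: inj_on_subset)
  have st: "\<And>a i. a \<in> T' - T \<Longrightarrow> i < len a \<Longrightarrow> st a i \<in> E"
    using W unfolding st_def by blast
  note odd = odd_multiplicity_edges[where A = "T' - T" and len = len and st = st,
      OF finE R st gain(1), folded S_def]
  have "even (card {h\<in>S. x \<in> h})" for x
  proof -
    have fin: "finite {h\<in>E. x \<in> h}" using finE by simp
    have "(\<Sum>h\<in>{h\<in>E. x \<in> h}. multiplicity (\<lambda>e. f ` e) R st len (T' - T) h) =
        (\<Sum>e\<in>R. of_bool (x \<in> f ` e)) + (\<Sum>a\<in>T' - T. \<Sum>i<len a. of_bool (x \<in> st a i))"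
      unfolding sum_multiplicity[OF fin]
        using R(2) st by (intro arg_cong2[where f = "(+)"] sum.cong) auto
    then have "even (\<Sum>h\<in>{h\<in>E. x \<in> h}. multiplicity (\<lambda>e. f ` e) R st len (T' - T) h)"
      using even_incidences_of_move[OF two T T' hT W[rule_format], of x]
      unfolding R_def st_def by simp
    moreover have "{h\<in>S. x \<in> h} =
        {h\<in>{h\<in>E. x \<in> h}. odd (multiplicity (\<lambda>e. f ` e) R st len (T' - T) h)}"
      unfolding S_def by auto
    ultimately show ?thesis using even_sum_iff_even_card_odd[OF fin] by simp
  qed
  moreover have "S \<subseteq> E" unfolding S_def by auto
  moreover have "card S < 2 * k" using odd(2) gain(2) by linarith
  ultimately show ?thesis using odd(1) by blast
qed

lemma k_optimal_graph_cost:
  assumes k: "0 < k" and finE: "finite E" and two: "\<forall>h\<in>E. card h = 2"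
    and girth: "girth_ge E (2 * k)" and T: "is_tour n T"
    and hT: "\<forall>e\<in>T. f ` e \<in> E \<or> card (f ` e) = 1"
    and injT: "inj_on (\<lambda>e. f ` e) {e\<in>T. f ` e \<in> E}"
  shows "k_optimal k n (graph_cost E k f) T"
  unfolding k_optimal_def
proof (intro conjI notI)
  show "is_tour n T" by fact
  assume "\<exists>T'. k_move k n T T' \<and> tour_len (graph_cost E k f) T' < tour_len (graph_cost E k f) T"
  then obtain S where S: "S \<subseteq> E" "S \<noteq> {}" "card S < 2 * k" "\<forall>x. even (card {h\<in>S. x \<in> h})"
    using even_subgraph_of_improving_move[OF k finE two T hT injT] by blast
  moreover have "finite S" "\<forall>h\<in>S. card h = 2" using S(1) finE two finite_subset by auto
  ultimately obtain l where "l \<le> card S" "has_cycle_len S l"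
    using has_cycle_len_if_even_degree by blast
  then have "has_cycle_len E l" "l < 2 * k" using has_cycle_len_mono S(1,3) by auto
  then show False using girth unfolding girth_ge_def by blast
qed

section \<open>Optimal tours for a graph metric\<close>

lemma card_value_changes_le:
  fixes F :: "nat \<Rightarrow> 'a::linorder"
  assumes mono: "\<And>i j. i \<le> j \<Longrightarrow> j < n \<Longrightarrow> F i \<le> F j"
    and V: "F ` {..<n} \<subseteq> V" "finite V"
  shows "card {i\<in>{..<n}. F i \<noteq> F (Suc i mod n)} \<le> card V"
proof -
  define Ch where "Ch = {i\<in>{..<n}. F i \<noteq> F (Suc i mod n)}"
  define g where "g i = F (Suc i mod n)" for i
  have lt: "g i \<noteq> g j" if ij: "i \<in> Ch" "j \<in> Ch" "i < j" for i j
  proof (cases "Suc j < n")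
    case True
    have "g i \<le> F j" unfolding g_def using ij True by (intro mono) auto
    also have "F j < F (Suc j)" using ij(2) True mono[of j "Suc j"] unfolding Ch_def by force
    finally show ?thesis unfolding g_def using True by simp
  next
    case False
    then have "Suc j = n" using ij(2) unfolding Ch_def by simp
    then have "Suc i < n" using ij by simp
    have "g j \<le> F i" unfolding g_def using \<open>Suc j = n\<close> \<open>Suc i < n\<close> by (intro mono) auto
    also have "F i < F (Suc i)" using ij(1) \<open>Suc i < n\<close> mono[of i "Suc i"] unfolding Ch_def by force
    finally show ?thesis unfolding g_def using \<open>Suc i < n\<close> by simp
  qed
  have "inj_on g Ch" by (rule inj_onI) (metis lt linorder_neqE_nat)
  moreover have "g ` Ch \<subseteq> V" using V(1) unfolding g_def Ch_def by auto
  ultimately show ?thesis unfolding Ch_def[symmetric] using card_inj_on_le V(2) by blast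
qed

lemma OPT_graph_cost_le:
  assumes n: "3 \<le> n" and V: "f ` {..<n} \<subseteq> V" "finite V"
  shows "OPT n (graph_cost E k f) \<le> real k * real (card V)"
proof -
  define xs where "xs = sort_key f [0..<n]"
  define p where "p i = xs ! i" for i
  have bij: "bij_betw p {..<n} {..<n}" unfolding p_def by (rule bij_betw_nth) (auto simp: xs_def)
  have mono: "f (p i) \<le> f (p j)" if "i \<le> j" "j < n" for i j
  proof -
    have "sorted (map f xs)" "length xs = n" unfolding xs_def by simp_all
    then show ?thesis using that sorted_nth_mono[of "map f xs" i j] unfolding p_def by simp
  qed
  define Ch where "Ch = {i\<in>{..<n}. f (p i) \<noteq> f (p (Suc i mod n))}"
  have "(\<lambda>i. f (p i)) ` {..<n} \<subseteq> V" using V(1) bij_betwE[OF bij] by blast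
  have "Ch \<subseteq> {..<n}" unfolding Ch_def by auto
  have card_Ch: "card Ch \<le> card V"
    unfolding Ch_def using card_value_changes_le[of n "\<lambda>i. f (p i)"] mono V(2)
      \<open>(\<lambda>i. f (p i)) ` {..<n} \<subseteq> V\<close> by blast
  have "OPT n (graph_cost E k f) \<le> tour_len (graph_cost E k f) (cycle_edge n p ` {..<n})"
    using bij n by (intro OPT_le) (auto simp: is_tour_iff)
  also have "\<dots> = (\<Sum>i<n. graph_cost E k f (cycle_edge n p i))" by (rule tour_len_reindex[OF bij n])
  also have "\<dots> \<le> (\<Sum>i<n. if i \<in> Ch then real k else 0)"
    by (intro sum_mono) (auto simp: cycle_edge_def graph_cost_pair tdist_le tdist_refl Ch_def)
  also have "\<dots> = (\<Sum>i\<in>Ch. real k)"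
    using sum.inter_restrict[of "{..<n}" "\<lambda>_. real k" Ch] \<open>Ch \<subseteq> {..<n}\<close> by (simp add: Int_absorb1)
  also have "\<dots> \<le> real k * real (card V)"
    using mult_left_mono[of "real (card Ch)" "real (card V)" "real k"] card_Ch
    by (simp add: mult.commute)
  finally show ?thesis .
qed

lemma eq_0_if_cyclically_constant:
  assumes "\<forall>i<n. F i = F (Suc i mod n)" and "i < n"
  shows "F i = F 0"
  using assms(2)
proof (induction i)
  case (Suc i)
  then show ?case using assms(1)[rule_format, of i] by simp
qed simp

lemma OPT_graph_cost_pos:
  assumes n: "3 \<le> n" and k: "0 < k" and uv: "u < n" "v < n" "f u \<noteq> f v"
  shows "0 < OPT n (graph_cost E k f)"
proof -
  obtain T where T: "is_tour n T" "OPT n (graph_cost E k f) = tour_len (graph_cost E k f) T"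
    using OPT_attained[OF n] by blast
  obtain p where p: "bij_betw p {..<n} {..<n}" "T = cycle_edge n p ` {..<n}"
    using T(1) unfolding is_tour_iff by blast
  have "\<exists>i<n. f (p i) \<noteq> f (p (Suc i mod n))"
  proof (rule ccontr)
    assume "\<not> ?thesis"
    then have const: "f (p i) = f (p 0)" if "i < n" for i
      using eq_0_if_cyclically_constant[of n "\<lambda>i. f (p i)" i] that by blast
    have "u \<in> p ` {..<n}" "v \<in> p ` {..<n}" using bij_betw_imp_surj_on[OF p(1)] uv(1,2) by auto
    then have "f u = f (p 0)" "f v = f (p 0)" using const by auto
    then show False using uv(3) by simp
  qed
  then obtain i where i: "i < n" "f (p i) \<noteq> f (p (Suc i mod n))" by blast
  have "0 < graph_cost E k f (cycle_edge n p i)"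
    using tdist_pos[OF i(2) k] by (simp add: cycle_edge_def graph_cost_pair)
  also have "\<dots> \<le> (\<Sum>j<n. graph_cost E k f (cycle_edge n p j))"
    using i(1) by (intro member_le_sum) (auto simp: graph_cost_def)
  finally show ?thesis using T(2) tour_len_reindex[OF p(1) n] p(2) by simp
qed

lemma ratio_le_alpha:
  assumes "metric_inst n c" "0 < OPT n c" "k_optimal k n c T"
  shows "ereal (tour_len c T / OPT n c) \<le> alpha k n"
  unfolding alpha_def using assms by (intro SUP_upper2[of "(c, T)"]) auto

lemma one_le_alpha:
  assumes "3 \<le> n" shows "1 \<le> alpha k n"
proof -
  define c where "c = (\<lambda>e::nat set. 1::real)"
  have len: "tour_len c T = real n" if "is_tour n T" for T
    unfolding tour_len_def c_def using card_tour[OF that] by simp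
  obtain T where T: "is_tour n T" "OPT n c = tour_len c T" using OPT_attained[OF assms] by blast
  have "k_optimal k n c T" unfolding k_optimal_def k_move_def using T(1) len by auto
  moreover have "metric_inst n c" unfolding metric_inst_def c_def by simp
  moreover have "OPT n c = real n" using T len by simp
  ultimately show ?thesis
    using ratio_le_alpha[of n c k T] assms len[OF T(1)] by (simp add: one_ereal_def)
qed

definition wrap :: "nat \<Rightarrow> (nat \<Rightarrow> nat) \<Rightarrow> nat \<Rightarrow> nat" where
  "wrap L w j = (if j < L then w j else w 0)"

lemma image_wrap_cycle_edge:
  assumes "3 \<le> L" "L \<le> n" "i < n"
  shows "wrap L w ` cycle_edge n id i = (if i < L then cycle_edge L w i else {w 0})"
proof -
  have succ: "wrap L w (Suc i mod n) = (if i < L then w (Suc i mod L) else w 0)"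
  proof (cases "Suc i < L")
    case True then show ?thesis using assms by (simp add: wrap_def)
  next
    case False
    then have "Suc i mod L = 0 \<or> \<not> i < L" by (cases "Suc i = L") auto
    moreover have "wrap L w (Suc i mod n) = w 0"
    proof (cases "Suc i < n")
      case False
      then have "Suc i = n" using assms(3) by simp
      then show ?thesis using assms(1,2) by (simp add: wrap_def)
    qed (use \<open>\<not> Suc i < L\<close> in \<open>simp add: wrap_def\<close>)
    ultimately show ?thesis by auto
  qed
  have "wrap L w ` cycle_edge n id i = {wrap L w i, wrap L w (Suc i mod n)}"
    by (simp add: cycle_edge_def)
  then show ?thesis unfolding succ by (simp add: cycle_edge_def wrap_def)
qed

lemma wrap_cycle_edge_in_iff:
  assumes two: "\<forall>h\<in>E. card h = 2" and tr: "closed_trail E L w" and Ln: "L \<le> n" and i: "i < n"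
  shows "wrap L w ` cycle_edge n id i \<in> E \<longleftrightarrow> i < L"
proof -
  have "{w 0} \<notin> E" using two by force
  then show ?thesis using image_wrap_cycle_edge[OF _ Ln i] tr unfolding closed_trail_def by auto
qed

lemma wrap_tour_edge_cases:
  assumes "closed_trail E L w" "L \<le> n"
  shows "\<forall>e\<in>cycle_edge n id ` {..<n}. wrap L w ` e \<in> E \<or> card (wrap L w ` e) = 1"
  using image_wrap_cycle_edge[of L n] assms unfolding closed_trail_def by auto

lemma inj_on_image_wrap:
  assumes two: "\<forall>h\<in>E. card h = 2" and tr: "closed_trail E L w" and Ln: "L \<le> n"
  shows "inj_on (\<lambda>e. wrap L w ` e) {e\<in>cycle_edge n id ` {..<n}. wrap L w ` e \<in> E}"
proof (rule inj_onI)
  fix e1 e2 assume e: "e1 \<in> {e\<in>cycle_edge n id ` {..<n}. wrap L w ` e \<in> E}"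
    "e2 \<in> {e\<in>cycle_edge n id ` {..<n}. wrap L w ` e \<in> E}" "wrap L w ` e1 = wrap L w ` e2"
  obtain i1 i2 where "i1 < n" "i2 < n" and i: "e1 = cycle_edge n id i1" "e2 = cycle_edge n id i2"
    using e(1,2) by blast
  then have "i1 < L" "i2 < L" using wrap_cycle_edge_in_iff[OF two tr Ln] e(1,2) by auto
  moreover have "3 \<le> L" using tr unfolding closed_trail_def by simp
  ultimately have "cycle_edge L w i1 = cycle_edge L w i2"
    using e(3) image_wrap_cycle_edge[OF _ Ln] i \<open>i1 < n\<close> \<open>i2 < n\<close> by auto
  then have "i1 = i2" using tr \<open>i1 < L\<close> \<open>i2 < L\<close> unfolding closed_trail_def
    by (meson inj_on_eq_iff lessThan_iff)
  then show "e1 = e2" using i by simp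
qed

lemma tour_len_wrap:
  assumes k: "0 < k" and two: "\<forall>h\<in>E. card h = 2" and tr: "closed_trail E L w" and Ln: "L \<le> n"
  shows "tour_len (graph_cost E k (wrap L w)) (cycle_edge n id ` {..<n}) = real L"
proof -
  have n: "3 \<le> n" and T: "is_tour n (cycle_edge n id ` {..<n})"
    using tr Ln unfolding closed_trail_def is_tour_iff by auto
  have "tour_len (graph_cost E k (wrap L w)) (cycle_edge n id ` {..<n}) =
      (\<Sum>i<n. graph_cost E k (wrap L w) (cycle_edge n id i))"
    using tour_len_reindex[of id n] n by simp
  also have "\<dots> = (\<Sum>i<n. of_bool (i < L))"
    using graph_cost_tour_edge[OF two k T wrap_tour_edge_cases[OF tr Ln]]
      wrap_cycle_edge_in_iff[OF two tr Ln] by (intro sum.cong) auto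
  also have "\<dots> = real L" using Ln by (simp add: Int_absorb1 subset_eq flip: lessThan_def)
  finally show ?thesis .
qed

lemma alpha_ge_closed_trail_ratio:
  assumes k: "0 < k" and finE: "finite E" and two: "\<forall>h\<in>E. card h = 2"
    and girth: "girth_ge E (2 * k)" and tr: "closed_trail E L w" and Ln: "L \<le> n"
  shows "ereal (real L / (real k * real (card (cycle_verts L w)))) \<le> alpha k n"
proof -
  have L: "3 \<le> L" using tr unfolding closed_trail_def by simp
  then have n: "3 \<le> n" using Ln by simp
  define c where "c = graph_cost E k (wrap L w)"
  define T0 where "T0 = cycle_edge n id ` {..<n}"
  have "is_tour n T0" unfolding T0_def is_tour_iff using n by auto
  then have kop: "k_optimal k n c T0" unfolding c_def T0_def using k
    by (intro k_optimal_graph_cost finE two girth wrap_tour_edge_cases[OF tr Ln]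
        inj_on_image_wrap[OF two tr Ln]) auto
  have "wrap L w ` {..<n} \<subseteq> cycle_verts L w" using L unfolding wrap_def cycle_verts_def by auto
  then have OPT_le: "OPT n c \<le> real k * real (card (cycle_verts L w))"
    unfolding c_def by (rule OPT_graph_cost_le[OF n]) (simp add: cycle_verts_def)
  have "cycle_edge L w 0 \<in> E" using tr L unfolding closed_trail_def by simp
  moreover have "cycle_edge L w 0 = {wrap L w 0, wrap L w 1}"
    using L by (simp add: wrap_def cycle_edge_def)
  ultimately have "wrap L w 0 \<noteq> wrap L w 1" using two by fastforce
  then have OPT_pos: "0 < OPT n c" unfolding c_def
    using OPT_graph_cost_pos[OF n, of k 0 1] k n by simp
  have len: "tour_len c T0 = real L"
    unfolding c_def T0_def using tour_len_wrap[OF _ two tr Ln] k by simp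
  have "real L / (real k * real (card (cycle_verts L w))) \<le> tour_len c T0 / OPT n c"
    unfolding len using OPT_le OPT_pos by (intro divide_left_mono) auto
  also have "ereal \<dots> \<le> alpha k n"
    using ratio_le_alpha[OF _ OPT_pos kop] metric_inst_graph_cost unfolding c_def by blast
  finally show ?thesis by simp
qed

text \<open>A matching has no cycles, so the minimum defining exinv is taken over a nonempty set.\<close>

lemma girth_ge_matching:
  "girth_ge ((\<lambda>i. {2 * i, 2 * i + 1}) ` {..<m}) g"
  unfolding girth_ge_def
proof (intro allI impI notI)
  fix l assume "has_cycle_len ((\<lambda>i. {2 * i, 2 * i + 1}) ` {..<m}) l"
  then obtain v where v: "3 \<le> l" "inj_on v {..<l}"
    "\<forall>i<l. {v i, v (Suc i mod l)} \<in> (\<lambda>i. {2 * i, 2 * i + 1}) ` {..<m}"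
    unfolding has_cycle_len_def by blast
  have uniq: "x \<in> {2 * a, 2 * a + 1} \<Longrightarrow> x \<in> {2 * b, 2 * b + 1} \<Longrightarrow> a = b" for x a b :: nat
    by auto
  obtain a where a: "{v 0, v 1} = {2 * a, 2 * a + 1}"
    using v(1) v(3)[rule_format, of 0] by auto
  obtain b where b: "{v (l - 1), v 0} = {2 * b, 2 * b + 1}"
  proof -
    have "Suc (l - 1) mod l = 0" using v(1) by simp
    moreover have "l - 1 < l" using v(1) by simp
    ultimately show ?thesis using v(3)[rule_format, of "l - 1"] that by auto
  qed
  have "a = b" using uniq[of "v 0" a b] a b by blast
  then have "{v 0, v 1} = {v (l - 1), v 0}" using a b by simp
  then have "v 1 = v (l - 1) \<or> v 0 = v 1" by (auto simp: doubleton_eq_iff)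
  moreover have "v 0 \<noteq> v 1" using inj_onD[OF v(2), of 0 1] v(1) by auto
  ultimately have "v 1 = v (l - 1)" by simp
  then have "1 = l - 1" using inj_onD[OF v(2), of 1 "l - 1"] v(1) by simp
  then show False using v(1) by simp
qed

lemma exinv_witness:
  "\<exists>E. E \<subseteq> edges_Kn (exinv m g) \<and> card E = m \<and> girth_ge E g"
proof -
  define M where "M = (\<lambda>i. {2 * i, 2 * i + 1}) ` {..<m}"
  have "M \<subseteq> edges_Kn (2 * m)" unfolding M_def edges_Kn_def by force
  moreover have "card M = m"
  proof -
    have "inj_on (\<lambda>i::nat. {2 * i, 2 * i + 1}) {..<m}"
      by (rule inj_onI) (auto simp: doubleton_eq_iff)
    then show ?thesis unfolding M_def by (simp add: card_image)
  qed
  moreover have "girth_ge M g" unfolding M_def by (rule girth_ge_matching)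
  ultimately have "\<exists>N E. E \<subseteq> edges_Kn N \<and> card E = m \<and> girth_ge E g" by blast
  then show ?thesis unfolding exinv_def by (rule LeastI_ex)
qed

lemma edges_Kn_finite: "finite (edges_Kn N)"
  by (rule finite_subset[of _ "Pow {..<N}"]) (auto simp: edges_Kn_def)

lemma card_edge_Kn: "e \<in> edges_Kn N \<Longrightarrow> card e = 2"
  unfolding edges_Kn_def by auto

lemma edge_Kn_subset: "e \<in> edges_Kn N \<Longrightarrow> e \<subseteq> {..<N}"
  unfolding edges_Kn_def by auto

lemma density_ratio_le:
  fixes n N L K k :: nat
  assumes dense: "(n - N) * K \<le> L * N" and nN: "2 * N \<le> n" and pos: "0 < N" "0 < K" "0 < k"
  shows "1 / (2 * real k) * real n / real N \<le> real L / (real k * real K)"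
proof -
  have "real ((n - N) * K) \<le> real (L * N)" using dense by (simp only: of_nat_le_iff)
  then have "(real n - real N) * real K \<le> real L * real N" using nN by (simp add: of_nat_diff)
  moreover have "real n * real K \<le> 2 * ((real n - real N) * real K)"
    using nN pos by (simp add: algebra_simps)
  ultimately have "real n * real K \<le> 2 * real L * real N" by linarith
  then have "real n * real K / (2 * real k * real N * real K) \<le>
      2 * real L * real N / (2 * real k * real N * real K)"
    using pos by (intro divide_right_mono) auto
  then show ?thesis using pos by (simp add: field_simps)
qed

lemma alpha_ge_density:
  assumes k: "0 < k" and n: "3 \<le> n"
    and E: "E \<subseteq> edges_Kn N" "card E = n" "girth_ge E (2 * k)"
  shows "ereal (1 / (2 * real k) * real n / real N) \<le> alpha k n"
proof -
  have finE: "finite E" using E(1) edges_Kn_finite finite_subset by blast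
  have two: "\<forall>h\<in>E. card h = 2" using E(1) card_edge_Kn by blast
  have VN: "\<Union>E \<subseteq> {..<N}" using E(1) edge_Kn_subset by blast
  obtain h where "h \<in> E" using E(2) n by fastforce
  moreover obtain x where "x \<in> h" using two \<open>h \<in> E\<close> by fastforce
  ultimately have N: "0 < N" using VN by fastforce
  show ?thesis
  proof (cases "2 * N \<le> n")
    case False
    have "real n \<le> real N * 2" using False by simp
    also have "\<dots> \<le> real N * (real k * 2)" using k by (intro mult_left_mono) auto
    finally have "1 / (2 * real k) * real n / real N \<le> 1"
      using k N by (simp add: field_simps)
    then have "ereal (1 / (2 * real k) * real n / real N) \<le> 1" by (simp add: one_ereal_def)
    then show ?thesis using one_le_alpha[OF n, of k] by (rule order_trans)
  next
    case True
    then have "N < card E" using E(2) N by simp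
    then obtain L w where tr: "closed_trail E L w"
      and dense: "(n - N) * card (cycle_verts L w) \<le> L * N"
      using exists_dense_closed_trail[OF finE two VN] E(2) by metis
    have "L \<le> n"
      using card_mono[OF finE cycle_edges_subset[OF tr]] card_cycle_edges[OF tr] E(2) by simp
    have "0 < card (cycle_verts L w)"
      using tr unfolding closed_trail_def cycle_verts_def
        by (auto simp: card_gt_0_iff lessThan_empty_iff)
    then have "1 / (2 * real k) * real n / real N \<le>
        real L / (real k * real (card (cycle_verts L w)))"
      using density_ratio_le[OF dense True N] k by simp
    also have "ereal \<dots> \<le> alpha k n"
      using alpha_ge_closed_trail_ratio[OF k finE two E(3) tr \<open>L \<le> n\<close>] .
    finally show ?thesis by simp
  qed
qed

theorem theorem3p4:
  fixes k :: nat
  assumes "k \<ge> 3"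
  shows "\<exists>C>0. \<forall>\<^sub>F n in sequentially.
           ereal (C * real n / real (exinv n (2 * k))) \<le> alpha k n"
proof (intro exI[of _ "1 / (2 * real k)"] conjI eventually_sequentiallyI)
  have k: "0 < k" using assms by simp
  then show "0 < 1 / (2 * real k)" by simp
  fix n :: nat assume "3 \<le> n"
  obtain E where "E \<subseteq> edges_Kn (exinv n (2 * k))" "card E = n" "girth_ge E (2 * k)"
    using exinv_witness by blast
  then show "ereal (1 / (2 * real k) * real n / real (exinv n (2 * k))) \<le> alpha k n"
    using alpha_ge_density[OF k \<open>3 \<le> n\<close>] by blast
qed

end
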